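(* Let $d\ge 2$ and $N\ge 1$ be integers and consider the infinite-temperature limit $\beta=0$, so that the thermal distribution of the system is uniform and the joint thermal distribution $\Gamma$ of system and memory is uniform on $\{1,\dots,dN\}$. Let $\mathbf p=(p_1,\dots,p_d)$ be a probability vector, let $i\neq j$ be two levels of the system, and let $\mathcal P^{(ij)}$ be the memory-assisted protocol defined in the context. Then $$\mathcal P^{(ij)}(\mathbf p\otimes\boldsymbol\eta_M)=\mathbf q\otimes\boldsymbol\eta_M,\qquad \mathbf q=\big(\Pi_{ij}+\epsilon(\mathbb 1-\Pi_{ij})\big)\mathbf p,$$ where $\Pi_{ij}$ is the $d\times d$ permutation matrix transposing entries $i$ and $j$, $\mathbb 1$ is the identity, and $\epsilon$ (which depends only on $N$) satisfies $$\epsilon=(\pi N)^{-1/2}+o\big(N^{-1/2}\big)\xrightarrow{N\to\infty}0 .$$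
   Context: Setting: a $d$-level system with energies $E_1,\dots,E_d$ and thermal (Gibbs) distribution $\gamma_a=e^{-\beta E_a}/\sum_b e^{-\beta E_b}$; an $N$-dimensional memory with trivial Hamiltonian, whose thermal state is the uniform distribution $\boldsymbol\eta_M=(1/N,\dots,1/N)$. Joint (energy-incoherent) states are probability vectors $\mathbf Q$ of length $dN$, where the entry with index $(a-1)N+k$ corresponds to system level $a\in\{1,\dots,d\}$ and memory level $k\in\{1,\dots,N\}$; $\mathbf p\otimes\boldsymbol\eta_M$ has entries $p_a/N$ and the joint thermal distribution is $\Gamma=\boldsymbol\gamma\otimes\boldsymbol\eta_M$, i.e. $\Gamma_{(a-1)N+k}=\gamma_a/N$. Two-level thermalisation $T_{xy}$ ($x\neq y$ joint indices): it maps $Q_x\mapsto (Q_x+Q_y)\Gamma_x/(\Gamma_x+\Gamma_y)$, $Q_y\mapsto (Q_x+Q_y)\Gamma_y/(\Gamma_x+\Gamma_y)$ and leaves all other entries unchanged. Round $\mathcal R^{(ij)}_k$ ($k=1,\dots,N$): apply sequentially, for $l=1,2,\dots,N$ in this order, the thermalisations $T_{(j-1)N+k,\,(i-1)N+l}$ (i.e. the $k$-th entry of the block of level $j$ is thermalised successively with every entry of the block of level $i$). Truncated protocol: $\widetilde{\mathcal P}^{(ij)}=\mathcal R^{(ij)}_N\circ\cdots\circ\mathcal R^{(ij)}_1$. Full thermalisation of the memory: $\mathcal T(\mathbf Q)=\mathbf q\otimes\boldsymbol\eta_M$ with $q_a=\sum_{k=1}^N Q_{(a-1)N+k}$. Protocol: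 $\mathcal P^{(ij)}=\mathcal T\circ\widetilde{\mathcal P}^{(ij)}$. *)

theory Defs
  imports Complex_Main "HOL-Library.Landau_Symbols"
begin

text \<open>Vectors are functions nat => real with 1-based indices.
 System levels a in {1..d}; joint index (a-1)*N + k with k in {1..N}.\<close>

definition gibbs :: "real \<Rightarrow> (nat \<Rightarrow> real) \<Rightarrow> nat \<Rightarrow> nat \<Rightarrow> real" where
  "gibbs \<beta> E d a = exp (- \<beta> * E a) / (\<Sum>b=1..d. exp (- \<beta> * E b))"

text \<open>Product p \<otimes> eta_M with the uniform memory state (zero outside {1..d*N}).\<close>
definition tensor_unif :: "nat \<Rightarrow> nat \<Rightarrow> (nat \<Rightarrow> real) \<Rightarrow> nat \<Rightarrow> real" where
  "tensor_unif d N p x = (if 1 \<le> x \<and> x \<le> d * N then p ((x - 1) div N + 1) / real N else 0)"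

definition joint_gibbs :: "real \<Rightarrow> (nat \<Rightarrow> real) \<Rightarrow> nat \<Rightarrow> nat \<Rightarrow> nat \<Rightarrow> real" where
  "joint_gibbs \<beta> E d N = tensor_unif d N (gibbs \<beta> E d)"

definition therm2 :: "(nat \<Rightarrow> real) \<Rightarrow> nat \<Rightarrow> nat \<Rightarrow> (nat \<Rightarrow> real) \<Rightarrow> nat \<Rightarrow> real" where
  "therm2 \<Gamma> x y Q = (\<lambda>z. if z = x then (Q x + Q y) * \<Gamma> x / (\<Gamma> x + \<Gamma> y)
                          else if z = y then (Q x + Q y) * \<Gamma> y / (\<Gamma> x + \<Gamma> y)
                          else Q z)"

definition round_ij :: "(nat \<Rightarrow> real) \<Rightarrow> nat \<Rightarrow> nat \<Rightarrow> nat \<Rightarrow> nat \<Rightarrow> (nat \<Rightarrow> real) \<Rightarrow> nat \<Rightarrow> real" where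
  "round_ij \<Gamma> N i j k Q =
     foldl (\<lambda>R l. therm2 \<Gamma> ((j - 1) * N + k) ((i - 1) * N + l) R) Q [1..<N+1]"

definition trunc_protocol :: "(nat \<Rightarrow> real) \<Rightarrow> nat \<Rightarrow> nat \<Rightarrow> nat \<Rightarrow> (nat \<Rightarrow> real) \<Rightarrow> nat \<Rightarrow> real" where
  "trunc_protocol \<Gamma> N i j Q = foldl (\<lambda>R k. round_ij \<Gamma> N i j k R) Q [1..<N+1]"

definition marginal :: "nat \<Rightarrow> (nat \<Rightarrow> real) \<Rightarrow> nat \<Rightarrow> real" where
  "marginal N Q a = (\<Sum>k=1..N. Q ((a - 1) * N + k))"

definition mem_therm :: "nat \<Rightarrow> nat \<Rightarrow> (nat \<Rightarrow> real) \<Rightarrow> nat \<Rightarrow> real" where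
  "mem_therm d N Q = tensor_unif d N (marginal N Q)"

definition protocol :: "(nat \<Rightarrow> real) \<Rightarrow> nat \<Rightarrow> nat \<Rightarrow> nat \<Rightarrow> nat \<Rightarrow> (nat \<Rightarrow> real) \<Rightarrow> nat \<Rightarrow> real" where
  "protocol \<Gamma> d N i j Q = mem_therm d N (trunc_protocol \<Gamma> N i j Q)"

definition swap_vec :: "nat \<Rightarrow> nat \<Rightarrow> (nat \<Rightarrow> real) \<Rightarrow> nat \<Rightarrow> real" where
  "swap_vec i j p = (\<lambda>a. p (if a = i then j else if a = j then i else a))"

definition prob_vec :: "nat \<Rightarrow> (nat \<Rightarrow> real) \<Rightarrow> bool" where
  "prob_vec d p \<longleftrightarrow> (\<forall>a\<in>{1..d}. p a \<ge> 0) \<and> (\<Sum>a=1..d. p a) = 1"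

end

theory Submission
  imports Defs "HOL-Analysis.Gamma_Function"
begin

(* At infinite temperature every two-level thermalisation replaces both entries by their mean.
   Hence the protocol only moves the memory blocks of the levels i and j, and each of their
   entries keeps the form p_j/N + (p_i - p_j)/N * w.  The weights w start at 1 on block i and
   0 on block j, and the averaging turns them into values of race k l, the probability that
   k tails are thrown before l heads with a fair coin.  After the N rounds block i carries
   the weights race N l, whose sum is N C(2N,N)/4^N.  So eps_N = C(2N,N)/4^N, which equals
   (-1)^N binom(-1/2, N), and the Gamma-function asymptotics of binomial coefficients give
   eps_N ~ 1/sqrt(pi N). *)

fun race :: "nat \<Rightarrow> nat \<Rightarrow> real" where
  "race k 0 = 0"
| "race 0 (Suc l) = 1"
| "race (Suc k) (Suc l) = (race (Suc k) l + race k (Suc l)) / 2"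

lemma race_swap: "0 < k \<or> 0 < l \<Longrightarrow> race k l + race l k = 1"
proof (induction k l rule: race.induct)
  case (1 k)
  then show ?case by (cases k) auto
next
  case (3 k l)
  then have "race (Suc k) l + race l (Suc k) = 1" "race k (Suc l) + race (Suc l) k = 1"
    by simp_all
  then show ?case by (simp add: field_simps)
qed simp

lemma race_0_left [simp]: "0 < l \<Longrightarrow> race 0 l = 1"
  by (cases l) simp_all

lemma race_diag: "0 < n \<Longrightarrow> race n n = 1 / 2"
  using race_swap[of n n] by simp

lemma race_Suc_0_left: "race (Suc 0) l = 1 - 1 / 2 ^ l"
  by (induction l) (auto simp: field_simps)

definition race_gap :: "nat \<Rightarrow> nat \<Rightarrow> real" where
  "race_gap k l = race k l - race (Suc k) l"

lemma race_gap_0_right [simp]: "race_gap k 0 = 0"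
  by (simp add: race_gap_def)

lemma race_gap_Suc_Suc: "race_gap (Suc k) (Suc l) = (race_gap (Suc k) l + race_gap k (Suc l)) / 2"
  by (simp add: race_gap_def field_simps)

lemma race_gap_eq: "0 < k \<or> 0 < l \<Longrightarrow> race_gap k l = real (k + l - 1 choose k) / 2 ^ (k + l)"
proof (induction k arbitrary: l)
  case 0
  then obtain l' where "l = Suc l'" by (cases l) auto
  then show ?case by (simp add: race_gap_def race_Suc_0_left field_simps)
next
  case (Suc k)
  note outer_IH = Suc.IH
  show ?case
  proof (induction l)
    case (Suc l)
    have "race_gap k (Suc l) = real (k + l choose k) / 2 ^ (k + Suc l)"
      using outer_IH[of "Suc l"] by simp
    with Suc.IH show ?case by (simp add: race_gap_Suc_Suc field_simps)
  qed simp
qed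

definition central_binom_ratio :: "nat \<Rightarrow> real" where
  "central_binom_ratio n = real ((2 * n) choose n) / 4 ^ n"

lemma central_binom_ratio_pochhammer: "central_binom_ratio n = pochhammer (1 / 2) n / fact n"
proof -
  have "real ((2 * n) choose n) = fact (2 * n) / (fact n * fact n)"
    by (simp add: binomial_fact)
  also have "\<dots> = 4 ^ n * pochhammer (1 / 2) n / fact n"
    by (simp add: fact_double power_mult)
  finally show ?thesis by (simp add: central_binom_ratio_def)
qed

lemma central_binom_ratio_Suc:
  "real (Suc n) * central_binom_ratio (Suc n) = central_binom_ratio n * (real n + 1 / 2)"
proof -
  have "real (Suc n) / fact (Suc n) = (1 :: real) / fact n"
    by simp
  then show ?thesis
    by (simp add: central_binom_ratio_pochhammer pochhammer_Suc)
qed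

lemma central_binom_ratio_gbinomial: "central_binom_ratio n = (-1) ^ n * ((- 1 / 2) gchoose n)"
  by (simp add: central_binom_ratio_pochhammer gbinomial_pochhammer)

lemma central_binomial_Suc: "(2 * Suc n) choose Suc n = 2 * (Suc (2 * n) choose Suc n)"
proof -
  have "Suc (2 * n) choose Suc n = Suc (2 * n) choose n"
    using binomial_symmetric[of n "Suc (2 * n)"] by (simp add: Suc_diff_le)
  then show ?thesis by simp
qed

lemma race_gap_below_diag: "race_gap n (Suc n) = central_binom_ratio n / 2"
proof -
  have "race_gap n (Suc n) = real (n + Suc n - 1 choose n) / 2 ^ (n + Suc n)"
    by (rule race_gap_eq) simp
  also have "n + Suc n - 1 = 2 * n"
    by simp
  also have "n + Suc n = Suc (2 * n)"
    by simp
  also have "real ((2 * n) choose n) / 2 ^ Suc (2 * n) = central_binom_ratio n / 2"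
    by (simp add: central_binom_ratio_def power_mult)
  finally show ?thesis .
qed

lemma race_gap_diag: "race_gap (Suc n) (Suc n) = central_binom_ratio (Suc n) / 2"
proof -
  have "race_gap (Suc n) (Suc n) = real (Suc n + Suc n - 1 choose Suc n) / 2 ^ (Suc n + Suc n)"
    by (rule race_gap_eq) simp
  also have "Suc n + Suc n - 1 = Suc (2 * n)"
    by simp
  also have "Suc n + Suc n = 2 * Suc n"
    by simp
  also have "real (Suc (2 * n) choose Suc n) / 2 ^ (2 * Suc n) = central_binom_ratio (Suc n) / 2"
    unfolding central_binom_ratio_def central_binomial_Suc power_mult by (simp del: binomial_Suc_Suc)
  finally show ?thesis .
qed

lemma race_gap_row_sum: "(\<Sum>l<N. race_gap N (Suc l)) = (1 - central_binom_ratio N) / 2"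
proof (induction N)
  case 0
  then show ?case by (simp add: central_binom_ratio_def)
next
  case (Suc N)
  have "(\<Sum>l<Suc N. race_gap (Suc N) (Suc l))
      = ((\<Sum>l<Suc N. race_gap (Suc N) l) + (\<Sum>l<Suc N. race_gap N (Suc l))) / 2"
    by (simp only: race_gap_Suc_Suc sum.distrib flip: sum_divide_distrib)
  also have "(\<Sum>l<Suc N. race_gap (Suc N) l)
      = (\<Sum>l<Suc N. race_gap (Suc N) (Suc l)) - race_gap (Suc N) (Suc N)"
    using sum.lessThan_Suc_shift[of "race_gap (Suc N)" N]
      sum.lessThan_Suc[of "\<lambda>l. race_gap (Suc N) (Suc l)" N]
    by simp
  also have "(\<Sum>l<Suc N. race_gap N (Suc l)) = (1 - central_binom_ratio N) / 2 + race_gap N (Suc N)"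
    by (simp only: sum.lessThan_Suc Suc.IH)
  finally show ?case
    by (simp only: race_gap_below_diag race_gap_diag) (simp add: field_simps)
qed

lemma race_row_sum: "(\<Sum>l=1..N. race N l) = real N * central_binom_ratio N"
proof (induction N)
  case 0
  then show ?case by simp
next
  case (Suc N)
  have "(\<Sum>l=1..Suc N. race (Suc N) l)
      = (\<Sum>l<N. race N (Suc l) - race_gap N (Suc l)) + race (Suc N) (Suc N)"
    by (simp add: sum.atLeast1_atMost_eq race_gap_def del: race.simps(3))
  also have "\<dots> = real N * central_binom_ratio N - (1 - central_binom_ratio N) / 2 + 1 / 2"
    using Suc.IH
    by (simp add: sum_subtractf race_gap_row_sum race_diag sum.atLeast1_atMost_eq del: race.simps)
  also have "\<dots> = real (Suc N) * central_binom_ratio (Suc N)"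
    by (simp only: central_binom_ratio_Suc) (simp add: field_simps)
  finally show ?case .
qed

lemma central_binom_ratio_sqrt_limit:
  "(\<lambda>n. central_binom_ratio n * sqrt (real n)) \<longlonglongrightarrow> 1 / sqrt pi"
proof -
  have "(\<lambda>n. ((- 1 / 2) gchoose n) / ((- 1) ^ n / exp ((- 1 / 2 + 1) * of_real (ln (real n)))))
          \<longlonglongrightarrow> inverse (Gamma (- (- 1 / 2 :: real)))"
    by (rule gbinomial_asymptotic)
  moreover have "eventually (\<lambda>n.
      ((- 1 / 2) gchoose n) / ((- 1) ^ n / exp ((- 1 / 2 + 1) * of_real (ln (real n))))
        = central_binom_ratio n * sqrt (real n)) sequentially"
    using eventually_gt_at_top[of "0 :: nat"]
  proof eventually_elim
    case (elim n)
    have "exp ((- 1 / 2 + 1) * ln (real n)) = sqrt (real n)"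
      using elim by (simp add: powr_def flip: powr_half_sqrt)
    then show ?case
      by (cases "even n") (simp_all add: central_binom_ratio_gbinomial)
  qed
  ultimately show ?thesis
    by (simp add: Lim_transform_eventually Gamma_one_half_real inverse_eq_divide)
qed

lemma central_binom_ratio_asymp:
  "(\<lambda>n. central_binom_ratio n - 1 / sqrt (pi * real n)) \<in> o(\<lambda>n. 1 / sqrt (real n))"
proof (rule smalloI_tendsto)
  have "(\<lambda>n. central_binom_ratio n * sqrt (real n) - 1 / sqrt pi) \<longlonglongrightarrow> 0"
    using tendsto_diff[OF central_binom_ratio_sqrt_limit tendsto_const[of "1 / sqrt pi"]] by simp
  moreover have "eventually (\<lambda>n. central_binom_ratio n * sqrt (real n) - 1 / sqrt pi
      = (central_binom_ratio n - 1 / sqrt (pi * real n)) / (1 / sqrt (real n))) sequentially"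
    using eventually_gt_at_top[of "0 :: nat"] by eventually_elim (simp add: real_sqrt_mult field_simps)
  ultimately show "((\<lambda>n. (central_binom_ratio n - 1 / sqrt (pi * real n)) / (1 / sqrt (real n)))
      \<longlongrightarrow> 0) at_top"
    by (rule Lim_transform_eventually)
  show "eventually (\<lambda>n. 1 / sqrt (real n) \<noteq> 0) at_top"
    using eventually_gt_at_top[of "0 :: nat"] by eventually_elim simp
qed

lemma foldl_upt_chain:
  assumes "\<And>l. l < n \<Longrightarrow> f (S l) (Suc l) = S (Suc l)"
  shows "foldl f (S 0) [1..<Suc n] = S n"
  using assms by (induction n) simp_all

lemma therm2_equal_weights:
  assumes "\<Gamma> x = \<Gamma> y" "\<Gamma> x \<noteq> 0" "x \<noteq> y"
  shows "therm2 \<Gamma> x y Q = Q(x := (Q x + Q y) / 2, y := (Q x + Q y) / 2)"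
  using assms by (auto simp: therm2_def fun_eq_iff field_simps)

definition sys_index :: "nat \<Rightarrow> nat \<Rightarrow> nat" where
  "sys_index N z = (z - 1) div N + 1"

definition mem_index :: "nat \<Rightarrow> nat \<Rightarrow> nat" where
  "mem_index N z = (z - 1) mod N + 1"

lemma
  assumes "m \<in> {1..N}" "1 \<le> a"
  shows sys_index_joint: "sys_index N ((a - 1) * N + m) = a"
    and mem_index_joint: "mem_index N ((a - 1) * N + m) = m"
proof -
  obtain m' where "m = Suc m'" "m' < N"
    using assms by (cases m) auto
  then show "sys_index N ((a - 1) * N + m) = a" "mem_index N ((a - 1) * N + m) = m"
    using assms by (simp_all add: sys_index_def mem_index_def)
qed

lemma joint_index_mem:
  fixes a m d N :: nat
  assumes "m \<in> {1..N}" "a \<in> {1..d}"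
  shows "(a - 1) * N + m \<in> {1..d * N}"
proof -
  have "(a - 1) * N + m \<le> (a - 1) * N + N"
    using assms by simp
  also have "\<dots> = a * N"
    using assms by (cases a) auto
  also have "\<dots> \<le> d * N"
    using assms by simp
  finally show ?thesis
    using assms by simp
qed

lemma joint_index_decomp:
  fixes z d N :: nat
  assumes "z \<in> {1..d * N}"
  shows "z = (sys_index N z - 1) * N + mem_index N z"
    and "sys_index N z \<in> {1..d}" and "mem_index N z \<in> {1..N}"
proof -
  have "0 < N"
    using assms by (cases N) auto
  then show "z = (sys_index N z - 1) * N + mem_index N z" "mem_index N z \<in> {1..N}"
    using assms by (auto simp: sys_index_def mem_index_def Suc_leI)
  have "(z - 1) div N < d"
    using assms by (intro less_mult_imp_div_less) auto
  then show "sys_index N z \<in> {1..d}"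
    by (simp add: sys_index_def)
qed

lemma tensor_unif_joint:
  assumes "m \<in> {1..N}" "a \<in> {1..d}"
  shows "tensor_unif d N p ((a - 1) * N + m) = p a / N"
  using joint_index_mem[OF assms] sys_index_joint[of m N a] assms
  by (simp add: tensor_unif_def sys_index_def)

lemma tensor_unif_cong:
  assumes "\<And>a. a \<in> {1..d} \<Longrightarrow> f a = g a"
  shows "tensor_unif d N f = tensor_unif d N g"
proof
  fix z
  show "tensor_unif d N f z = tensor_unif d N g z"
    using assms joint_index_decomp(2)[of z d N] by (simp add: tensor_unif_def sys_index_def)
qed

lemma joint_gibbs_zero:
  assumes "0 < d" "z \<in> {1..d * N}"
  shows "joint_gibbs 0 E d N z = 1 / (real d * real N)"
  using assms by (simp add: joint_gibbs_def tensor_unif_def gibbs_def)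


context
  fixes d N i j :: nat and p :: "nat \<Rightarrow> real"
  assumes N_pos: "0 < N" and i: "i \<in> {1..d}" and j: "j \<in> {1..d}" and "i \<noteq> j"
begin

definition blocks :: "(nat \<times> nat \<Rightarrow> real) \<Rightarrow> nat \<Rightarrow> real" where
  "blocks w z = (if z \<in> {1..d * N} \<and> sys_index N z \<in> {i, j}
     then p j / N + (p i - p j) / N * w (sys_index N z, mem_index N z)
     else tensor_unif d N p z)"

lemma blocks_joint:
  assumes "a \<in> {i, j}" "m \<in> {1..N}"
  shows "blocks w ((a - 1) * N + m) = p j / N + (p i - p j) / N * w (a, m)"
proof -
  have "a \<in> {1..d}"
    using assms i j by auto
  then have "(a - 1) * N + m \<in> {1..d * N}"
    using assms joint_index_mem by blast
  moreover have "sys_index N ((a - 1) * N + m) = a" "mem_index N ((a - 1) * N + m) = m"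
    using assms \<open>a \<in> {1..d}\<close> sys_index_joint mem_index_joint by auto
  ultimately show ?thesis
    using assms(1) unfolding blocks_def by simp
qed

lemma blocks_cong:
  assumes "\<And>a m. a \<in> {i, j} \<Longrightarrow> m \<in> {1..N} \<Longrightarrow> w (a, m) = w' (a, m)"
  shows "blocks w = blocks w'"
proof
  fix z
  show "blocks w z = blocks w' z"
    using assms joint_index_decomp(3)[of z d N] by (auto simp: blocks_def)
qed

lemma blocks_initial: "blocks (\<lambda>(a, m). if a = i then 1 else 0) = tensor_unif d N p"
proof
  fix z
  show "blocks (\<lambda>(a, m). if a = i then 1 else 0) z = tensor_unif d N p z"
    using \<open>i \<noteq> j\<close> unfolding blocks_def tensor_unif_def sys_index_def
    by (auto simp: diff_divide_distrib)
qed

lemma therm2_blocks: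
  fixes w :: "nat \<times> nat \<Rightarrow> real"
  assumes ab: "a \<in> {i, j}" "b \<in> {i, j}" and m: "m \<in> {1..N}" "m' \<in> {1..N}"
    and "(a, m) \<noteq> (b, m')"
  defines "t \<equiv> (w (a, m) + w (b, m')) / 2"
  shows "therm2 (joint_gibbs 0 E d N) ((a - 1) * N + m) ((b - 1) * N + m') (blocks w)
           = blocks (w((a, m) := t, (b, m') := t))"
proof -
  define x y where "x = (a - 1) * N + m" and "y = (b - 1) * N + m'"
  have a: "a \<in> {1..d}" and b: "b \<in> {1..d}"
    using ab i j by auto
  have x: "x \<in> {1..d * N}" "sys_index N x = a" "mem_index N x = m"
    unfolding x_def
    using joint_index_mem[OF m(1) a] sys_index_joint[OF m(1)] mem_index_joint[OF m(1)] a by simp_all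
  have y: "y \<in> {1..d * N}" "sys_index N y = b" "mem_index N y = m'"
    unfolding y_def
    using joint_index_mem[OF m(2) b] sys_index_joint[OF m(2)] mem_index_joint[OF m(2)] b by simp_all
  have "x \<noteq> y"
    using x(2,3) y(2,3) \<open>(a, m) \<noteq> (b, m')\<close> by metis
  have "0 < d"
    using i by simp
  then have "therm2 (joint_gibbs 0 E d N) x y (blocks w)
      = (blocks w)(x := (blocks w x + blocks w y) / 2, y := (blocks w x + blocks w y) / 2)"
    using x y \<open>x \<noteq> y\<close> N_pos by (intro therm2_equal_weights) (simp_all add: joint_gibbs_zero)
  also have "(blocks w x + blocks w y) / 2 = p j / N + (p i - p j) / N * t"
    unfolding x_def y_def blocks_joint[OF ab(1) m(1)] blocks_joint[OF ab(2) m(2)] t_def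
    using N_pos by (simp add: field_simps)
  also have "(blocks w)(x := p j / N + (p i - p j) / N * t, y := p j / N + (p i - p j) / N * t)
      = blocks (w((a, m) := t, (b, m') := t))"
  proof
    fix z
    show "((blocks w)(x := p j / N + (p i - p j) / N * t, y := p j / N + (p i - p j) / N * t)) z
        = blocks (w((a, m) := t, (b, m') := t)) z"
    proof (cases "z \<in> {x, y}")
      case True
      moreover have "blocks (w((a, m) := t, (b, m') := t)) x = p j / N + (p i - p j) / N * t"
        "blocks (w((a, m) := t, (b, m') := t)) y = p j / N + (p i - p j) / N * t"
        unfolding x_def y_def blocks_joint[OF ab(1) m(1)] blocks_joint[OF ab(2) m(2)] by simp_all
      ultimately show ?thesis
        by auto
    next
      case False
      then have "z \<in> {1..d * N} \<Longrightarrow> (sys_index N z, mem_index N z) \<notin> {(a, m), (b, m')}"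
        using joint_index_decomp(1)[of z d N] x y by (auto simp: x_def y_def)
      then show ?thesis
        using False by (auto simp: blocks_def)
    qed
  qed
  finally show ?thesis
    by (simp add: x_def y_def)
qed

lemma marginal_blocks:
  assumes a: "a \<in> {1..d}"
  shows "marginal N (blocks w) a
    = (if a \<in> {i, j} then p j + (p i - p j) / N * (\<Sum>m=1..N. w (a, m)) else p a)"
proof -
  have "marginal N (blocks w) a
      = (\<Sum>m=1..N. if a \<in> {i, j} then p j / N + (p i - p j) / N * w (a, m) else p a / N)"
    unfolding marginal_def
  proof (intro sum.cong refl)
    fix m assume m: "m \<in> {1..N}"
    show "blocks w ((a - 1) * N + m)
        = (if a \<in> {i, j} then p j / N + (p i - p j) / N * w (a, m) else p a / N)"
    proof (cases "a \<in> {i, j}")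
      case True
      then show ?thesis
        using blocks_joint[OF True m] by simp
    next
      case False
      then show ?thesis
        using joint_index_mem[OF m a] sys_index_joint[OF m] tensor_unif_joint[OF m a] a
        by (simp add: blocks_def)
    qed
  qed
  then show ?thesis
    using N_pos by (cases "a \<in> {i, j}") (simp_all add: sum.distrib flip: sum_distrib_left sum_divide_distrib)
qed

(* The weights after the rounds 1, ..., k and the first l thermalisations of round k + 1. *)
definition round_weight :: "nat \<Rightarrow> nat \<Rightarrow> nat \<times> nat \<Rightarrow> real" where
  "round_weight k l = (\<lambda>(a, m).
     if a = i then (if m \<le> l then race (Suc k) m else race k m)
     else if a = j then (if m \<le> k then race m N else if m = Suc k then race (Suc k) l else 0)
     else 0)"

lemma therm2_round_weight:
  assumes "k < N" "l < N"
  shows "therm2 (joint_gibbs 0 E d N) ((j - 1) * N + Suc k) ((i - 1) * N + Suc l)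
      (blocks (round_weight k l)) = blocks (round_weight k (Suc l))"
proof -
  let ?w = "round_weight k l"
  have mean: "(?w (j, Suc k) + ?w (i, Suc l)) / 2 = race (Suc k) (Suc l)"
    using \<open>i \<noteq> j\<close> by (simp add: round_weight_def)
  have update: "?w((j, Suc k) := race (Suc k) (Suc l), (i, Suc l) := race (Suc k) (Suc l))
      = round_weight k (Suc l)"
    using \<open>i \<noteq> j\<close> by (auto simp: round_weight_def fun_eq_iff le_Suc_eq simp del: race.simps)
  have "therm2 (joint_gibbs 0 E d N) ((j - 1) * N + Suc k) ((i - 1) * N + Suc l) (blocks ?w)
      = blocks (?w((j, Suc k) := (?w (j, Suc k) + ?w (i, Suc l)) / 2,
                   (i, Suc l) := (?w (j, Suc k) + ?w (i, Suc l)) / 2))"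
    using assms \<open>i \<noteq> j\<close> by (intro therm2_blocks) auto
  then show ?thesis
    unfolding mean update .
qed

lemma round_ij_blocks:
  assumes "k < N"
  shows "round_ij (joint_gibbs 0 E d N) N i j (Suc k) (blocks (round_weight k 0))
    = blocks (round_weight (Suc k) 0)"
proof -
  have "round_ij (joint_gibbs 0 E d N) N i j (Suc k) (blocks (round_weight k 0))
      = blocks (round_weight k N)"
    unfolding round_ij_def Suc_eq_plus1[symmetric]
    by (rule foldl_upt_chain[where S = "\<lambda>l. blocks (round_weight k l)"])
      (use therm2_round_weight assms in simp)
  also have "\<dots> = blocks (round_weight (Suc k) 0)"
    by (rule blocks_cong) (auto simp: round_weight_def le_Suc_eq)
  finally show ?thesis .
qed

lemma trunc_protocol_blocks:
  "trunc_protocol (joint_gibbs 0 E d N) N i j (tensor_unif d N p) = blocks (round_weight N 0)"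
proof -
  have "tensor_unif d N p = blocks (round_weight 0 0)"
    unfolding blocks_initial[symmetric] by (rule blocks_cong) (auto simp: round_weight_def)
  then show ?thesis
    unfolding trunc_protocol_def Suc_eq_plus1[symmetric]
    by (simp only:)
      (rule foldl_upt_chain[where S = "\<lambda>k. blocks (round_weight k 0)"], use round_ij_blocks in simp)
qed

lemma protocol_tensor_unif:
  "protocol (joint_gibbs 0 E d N) d N i j (tensor_unif d N p)
     = tensor_unif d N (\<lambda>a. swap_vec i j p a + central_binom_ratio N * (p a - swap_vec i j p a))"
proof -
  have sum_i: "(\<Sum>m=1..N. round_weight N 0 (i, m)) = real N * central_binom_ratio N"
    using race_row_sum[of N] by (simp add: round_weight_def)
  have sum_j: "(\<Sum>m=1..N. round_weight N 0 (j, m)) = real N * (1 - central_binom_ratio N)"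
  proof -
    have "(\<Sum>m=1..N. round_weight N 0 (j, m)) = (\<Sum>m=1..N. 1 - race N m)"
      using \<open>i \<noteq> j\<close> race_swap by (intro sum.cong) (auto simp: round_weight_def algebra_simps)
    then show ?thesis
      using race_row_sum[of N] by (simp add: sum_subtractf algebra_simps)
  qed
  show ?thesis
    unfolding protocol_def mem_therm_def trunc_protocol_blocks
    using sum_i sum_j N_pos \<open>i \<noteq> j\<close>
    by (intro tensor_unif_cong) (auto simp: marginal_blocks swap_vec_def; simp add: field_simps)
qed

end

theorem lemma1:
  shows "\<exists>\<epsilon> :: nat \<Rightarrow> real.
     (\<forall>(d::nat) (N::nat) (E::nat \<Rightarrow> real) p i j.
        d \<ge> 2 \<longrightarrow> N \<ge> 1 \<longrightarrow> prob_vec d p \<longrightarrow>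
        i \<in> {1..d} \<longrightarrow> j \<in> {1..d} \<longrightarrow> i \<noteq> j \<longrightarrow>
        protocol (joint_gibbs 0 E d N) d N i j (tensor_unif d N p)
          = tensor_unif d N (\<lambda>a. swap_vec i j p a + \<epsilon> N * (p a - swap_vec i j p a)))
   \<and> (\<lambda>N. \<epsilon> N - 1 / sqrt (pi * real N)) \<in> o(\<lambda>N. 1 / sqrt (real N))"
proof (intro exI[of _ central_binom_ratio] conjI allI impI)
  fix d N :: nat and E p :: "nat \<Rightarrow> real" and i j :: nat
  assume "N \<ge> 1" "i \<in> {1..d}" "j \<in> {1..d}" "i \<noteq> j"
  then show "protocol (joint_gibbs 0 E d N) d N i j (tensor_unif d N p)
      = tensor_unif d N (\<lambda>a. swap_vec i j p a + central_binom_ratio N * (p a - swap_vec i j p a))"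
    by (intro protocol_tensor_unif) auto
next
  show "(\<lambda>N. central_binom_ratio N - 1 / sqrt (pi * real N)) \<in> o(\<lambda>N. 1 / sqrt (real N))"
    by (rule central_binom_ratio_asymp)
qed

end
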